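(* Let $\epsilon\in\{+1,-1\}$ and $s\ge0$, and let $G_3^{s,\epsilon}=(P_1,P_2,P_3)/Q$ with $P_1=256\epsilon z+96izw+64\epsilon s w^2+64z^3+64i\epsilon s z^2w-3(3\epsilon-16s^2)zw^2+4isw^3$, $P_2=256\epsilon z^2-16w^2+256sz^3+16iz^2w-16\epsilon s zw^2-i\epsilon w^3$, $P_3=w\bigl(256\epsilon-32iw+64z^2-64i\epsilon s zw-(\epsilon+16s^2)w^2\bigr)$, $Q=256\epsilon-32iw+64z^2-192i\epsilon s zw-(17\epsilon+144s^2)w^2+32i\epsilon z^2w+24szw^2+iw^3$. Then $G_3^{s,\epsilon}$ is of degree $2$ if and only if $\epsilon=-1$ and $s=\frac12$.
   Context: For a rational holomorphic map $H=(P_1,\dots,P_{N'})/Q$ with polynomials $P_k,Q$, $H$ is reduced if $P_1,\dots,P_{N'},Q$ have no common factor, and the degree of a reduced rational map is $\max(\deg P_1,\dots,\deg P_{N'},\deg Q)$; the degree of a rational map is that of its reduced representation. *)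

theory Defs
  imports Complex_Main "HOL-Computational_Algebra.Polynomial"
begin

text \<open>Bivariate complex polynomials in (z,w) are represented as complex poly poly:
  the outer variable is w, the coefficients are polynomials in z.\<close>

definition Zv :: "complex poly poly" where "Zv = [:[:0, 1:]:]"
definition Wv :: "complex poly poly" where "Wv = [:0, 1:]"
definition cst :: "complex \<Rightarrow> complex poly poly" where "cst c = [:[:c:]:]"

definition tdeg :: "'a::zero poly poly \<Rightarrow> nat" where
  "tdeg p = Max (insert 0 {degree (coeff p i) + i | i. coeff p i \<noteq> 0})"

definition rat_map_reduced :: "complex poly poly list \<Rightarrow> complex poly poly \<Rightarrow> bool" where
  "rat_map_reduced Ps Q \<longleftrightarrow> (\<forall>d. d dvd Q \<and> (\<forall>p\<in>set Ps. d dvd p) \<longrightarrow> is_unit d)"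

definition rat_map_degree :: "complex poly poly list \<Rightarrow> complex poly poly \<Rightarrow> nat" where
  "rat_map_degree Ps Q = (THE d. \<exists>Ps' Q'. Q' \<noteq> 0 \<and> length Ps' = length Ps \<and>
      (\<forall>k<length Ps. Ps ! k * Q' = Ps' ! k * Q) \<and> rat_map_reduced Ps' Q' \<and>
      d = Max (tdeg ` set (Q' # Ps')))"

definition G3_P1 :: "real \<Rightarrow> real \<Rightarrow> complex poly poly" where
  "G3_P1 e s = (let z = Zv; w = Wv; E = cst (complex_of_real e); S = cst (complex_of_real s); I = cst \<i> in
     256*E*z + 96*I*z*w + 64*E*S*w^2 + 64*z^3 + 64*I*E*S*z^2*w
     - 3*(3*E - 16*S^2)*z*w^2 + 4*I*S*w^3)"

definition G3_P2 :: "real \<Rightarrow> real \<Rightarrow> complex poly poly" where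
  "G3_P2 e s = (let z = Zv; w = Wv; E = cst (complex_of_real e); S = cst (complex_of_real s); I = cst \<i> in
     256*E*z^2 - 16*w^2 + 256*S*z^3 + 16*I*z^2*w - 16*E*S*z*w^2 - I*E*w^3)"

definition G3_P3 :: "real \<Rightarrow> real \<Rightarrow> complex poly poly" where
  "G3_P3 e s = (let z = Zv; w = Wv; E = cst (complex_of_real e); S = cst (complex_of_real s); I = cst \<i> in
     w * (256*E - 32*I*w + 64*z^2 - 64*I*E*S*z*w - (E + 16*S^2)*w^2))"

definition G3_Q :: "real \<Rightarrow> real \<Rightarrow> complex poly poly" where
  "G3_Q e s = (let z = Zv; w = Wv; E = cst (complex_of_real e); S = cst (complex_of_real s); I = cst \<i> in
     256*E - 32*I*w + 64*z^2 - 192*I*E*S*z*w - (17*E + 144*S^2)*w^2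
     + 32*I*E*z^2*w + 24*S*z*w^2 + I*w^3)"

end

theory Submission
  imports Defs "HOL-Computational_Algebra.Polynomial_Factorial"
    "HOL-Computational_Algebra.Fundamental_Theorem_Algebra" "HOL-Computational_Algebra.Field_as_Ring"
begin

text \<open>
  Away from \<open>\<epsilon> = -1, s = 1/2\<close> the polynomials \<open>Q\<close> and \<open>P\<^sub>2\<close> have no common factor. Indeed, the
  coefficient of \<open>w\<^sup>3\<close> in \<open>Q\<close> is the constant \<open>i\<close>, so a non-unit common factor has positive degree in
  \<open>w\<close> with constant leading coefficient and therefore vanishes at some point of the line \<open>z = 0\<close>.
  That point would be a common root of \<open>Q(0,w)\<close> and \<open>P\<^sub>2(0,w) = -w\<^sup>2(16 + i\<epsilon>w)\<close>; the only candidate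
  \<open>w = 16i\<epsilon>\<close> is a root of \<open>Q(0,w)\<close> iff \<open>\<epsilon> + 4s\<^sup>2 = 0\<close>. So the given representation is reduced and
  its degree is at least \<open>deg P\<^sub>1 = 3\<close>. For \<open>\<epsilon> = -1, s = 1/2\<close> all four polynomials are divisible by
  \<open>iw + 8z - 16\<close>, and the same argument shows that the quotient map, of degree 2, is reduced.
\<close>

lemma poly_poly_eqI:
  fixes p q :: "'a::{idom,ring_char_0} poly poly"
  assumes "\<And>x y. poly (poly p x) y = poly (poly q x) y"
  shows "p = q"
proof -
  have "poly p x = poly q x" for x
    using assms poly_eq_poly_eq_iff by blast
  then show ?thesis
    using poly_eq_poly_eq_iff by blast
qed

lemma poly_map_poly_eval_0:
  fixes p :: "'a::comm_semiring_1 poly poly"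
  shows "poly (map_poly (\<lambda>c. poly c 0) p) w = poly (poly p [:w:]) 0"
  by (induction p) (auto simp: map_poly_pCons)

lemma finite_tdeg_set:
  fixes p :: "'a::zero poly poly"
  shows "finite (insert 0 {degree (coeff p i) + i | i. coeff p i \<noteq> 0})"
proof -
  have "{degree (coeff p i) + i | i. coeff p i \<noteq> 0} \<subseteq> (\<lambda>i. degree (coeff p i) + i) ` {..degree p}"
    using le_degree by blast
  then show ?thesis
    using finite_surj by blast
qed

lemma tdeg_ge:
  fixes p :: "'a::zero poly poly"
  assumes "coeff p i \<noteq> 0"
  shows "degree (coeff p i) + i \<le> tdeg p"
  unfolding tdeg_def using assms by (intro Max_ge[OF finite_tdeg_set]) blast

lemma tdeg_leI:
  fixes p :: "'a::zero poly poly"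
  assumes "\<And>i. coeff p i \<noteq> 0 \<Longrightarrow> degree (coeff p i) + i \<le> n"
  shows "tdeg p \<le> n"
  unfolding tdeg_def using assms by (subst Max_le_iff[OF finite_tdeg_set]) auto

lemma tdeg_pCons3_le:
  fixes a b c :: "'a::zero poly"
  assumes "degree a \<le> n" "degree b + 1 \<le> n" "degree c + 2 \<le> n"
  shows "tdeg [:a, b, c:] \<le> n"
proof (rule tdeg_leI)
  fix i
  have "coeff [:a, b, c:] i = (if i = 0 then a else if i = 1 then b else if i = 2 then c else 0)"
    by (auto simp: coeff_pCons split: nat.split)
  then show "coeff [:a, b, c:] i \<noteq> 0 \<Longrightarrow> degree (coeff [:a, b, c:] i) + i \<le> n"
    using assms by (auto split: if_splits)
qed

lemma tdeg_unit_mult: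
  fixes u p :: "complex poly poly"
  assumes "is_unit u"
  shows "tdeg (u * p) = tdeg p"
proof -
  obtain c where c: "u = [:[:c:]:]" "is_unit c"
    using assms by (metis is_unit_poly_iff)
  then have "coeff (u * p) i = smult c (coeff p i)" for i
    by simp
  moreover have "c \<noteq> 0"
    using c by auto
  ultimately show ?thesis
    unfolding tdeg_def by (simp add: degree_smult_eq)
qed

lemma constant_lead_coeff_of_dvd:
  fixes d Q :: "complex poly poly"
  assumes "d dvd Q" and "lead_coeff Q = [:c:]" and "c \<noteq> 0"
  obtains c' where "lead_coeff d = [:c':]" and "c' \<noteq> 0"
proof -
  obtain a where Q: "Q = d * a"
    using assms(1) by blast
  have "d \<noteq> 0" "a \<noteq> 0"
    using assms(2,3) Q by auto
  moreover have "lead_coeff d * lead_coeff a = [:c:]"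
    using assms(2) Q by (simp add: lead_coeff_mult)
  ultimately have "degree (lead_coeff d) = 0"
    by (metis add_is_0 degree_mult_eq degree_pCons_0 leading_coeff_0_iff)
  then show ?thesis
    using that \<open>d \<noteq> 0\<close> by (metis degree_eq_zeroE leading_coeff_0_iff pCons_0_0)
qed

lemma is_unit_common_divisor:
  fixes Q P d :: "complex poly poly"
  assumes dQ: "d dvd Q" and dP: "d dvd P" and lc: "lead_coeff Q = [:c:]" "c \<noteq> 0"
    and no_common_root: "\<And>w. poly (poly Q [:w:]) 0 = 0 \<Longrightarrow> poly (poly P [:w:]) 0 \<noteq> 0"
  shows "is_unit d"
proof -
  obtain c' where lcd: "lead_coeff d = [:c':]" "c' \<noteq> 0"
    using constant_lead_coeff_of_dvd[OF dQ lc] .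
  show ?thesis
  proof (cases "degree d = 0")
    case True
    then have "d = [:[:c':]:]"
      using lcd by (metis degree_eq_zeroE lead_coeff_pCons(2) pCons_0_0)
    then have "d * [:[:1/c':]:] = 1"
      using lcd by (simp add: one_pCons)
    then show ?thesis
      by (metis dvdI)
  next
    case False
    define d\<^sub>0 where "d\<^sub>0 = map_poly (\<lambda>c. poly c 0) d"
    have "coeff d\<^sub>0 (degree d) = c'"
      unfolding d\<^sub>0_def using lcd by (simp add: coeff_map_poly)
    then have "degree d\<^sub>0 \<noteq> 0"
      using False lcd le_degree[of d\<^sub>0 "degree d"] by auto
    then obtain w where "poly d\<^sub>0 w = 0"
      using fundamental_theorem_of_algebra[of d\<^sub>0] constant_degree[of d\<^sub>0] by auto
    then have "poly (poly d [:w:]) 0 = 0"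
      unfolding d\<^sub>0_def poly_map_poly_eval_0 .
    then have "poly (poly Q [:w:]) 0 = 0" and "poly (poly P [:w:]) 0 = 0"
      using dQ dP by (auto elim!: dvdE)
    then show ?thesis
      using no_common_root by blast
  qed
qed

lemma reduced_cofactor_is_unit:
  fixes Q a b :: "complex poly poly"
  assumes "rat_map_reduced Ps Q" and "a dvd Q" and "coprime a b"
    and "length Ps' = length Ps" and "\<forall>k<length Ps. Ps ! k * b = Ps' ! k * a"
  shows "is_unit a"
proof -
  have "a dvd p" if "p \<in> set Ps" for p
  proof -
    obtain k where k: "k < length Ps" "p = Ps ! k"
      using \<open>p \<in> set Ps\<close> by (metis in_set_conv_nth)
    then have "a dvd Ps ! k * b"
      using assms(5) by simp
    then show ?thesis
      using k(2) assms(3) coprime_dvd_mult_left_iff by blast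
  qed
  then show ?thesis
    using assms(1,2) unfolding rat_map_reduced_def by blast
qed

lemma reduced_representation_unique:
  fixes Q Q' Q'' :: "complex poly poly"
  assumes "Q \<noteq> 0" and "Q' \<noteq> 0"
    and "length Ps' = length Ps" and "length Ps'' = length Ps"
    and rep': "\<forall>k<length Ps. Ps ! k * Q' = Ps' ! k * Q"
    and rep'': "\<forall>k<length Ps. Ps ! k * Q'' = Ps'' ! k * Q"
    and "rat_map_reduced Ps' Q'" and "rat_map_reduced Ps'' Q''"
  obtains u where "is_unit u" and "Q'' = u * Q'" and "Ps'' = map ((*) u) Ps'"
proof -
  define g where "g = gcd Q' Q''"
  have "g \<noteq> 0"
    using \<open>Q' \<noteq> 0\<close> g_def by simp
  obtain a b where ab: "Q' = a * g" "Q'' = b * g" "coprime a b"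
    using gcd_coprime_exists[of Q' Q''] \<open>g \<noteq> 0\<close> unfolding g_def by blast
  have cross: "Ps' ! k * b = Ps'' ! k * a" if "k < length Ps" for k
  proof -
    have "(Ps' ! k * Q'') * Q = (Ps' ! k * Q) * Q''"
      by (simp only: ac_simps)
    also have "\<dots> = (Ps ! k * Q'') * Q'"
      using rep' that by (simp add: ac_simps)
    also have "\<dots> = (Ps'' ! k * Q') * Q"
      using rep'' that by (simp add: ac_simps)
    finally have "Ps' ! k * Q'' = Ps'' ! k * Q'"
      using \<open>Q \<noteq> 0\<close> by simp
    then have "(Ps' ! k * b) * g = (Ps'' ! k * a) * g"
      unfolding ab(1,2) by (simp only: ac_simps)
    then show ?thesis
      using \<open>g \<noteq> 0\<close> by simp
  qed
  have "is_unit a"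
    using reduced_cofactor_is_unit[of Ps' Q' a b Ps''] assms(3,4,7) ab cross by auto
  moreover have "is_unit b"
    using reduced_cofactor_is_unit[of Ps'' Q'' b a Ps'] assms(3,4,8) ab cross
    by (auto simp: coprime_commute)
  ultimately obtain a' where a': "1 = a * a'" "is_unit (b * a')"
    by (metis dvdE is_unit_mult_iff dvd_triv_right)
  have "Q'' = (b * a') * Q'"
  proof -
    have "(b * a') * Q' = b * (a * a') * g"
      unfolding ab(1) by (simp only: ac_simps)
    then show ?thesis
      using a'(1) ab(2) by (simp only: mult_1_right)
  qed
  moreover have "Ps'' ! k = (b * a') * Ps' ! k" if "k < length Ps" for k
  proof -
    have "(b * a') * Ps' ! k = (Ps' ! k * b) * a'"
      by (simp only: ac_simps)
    also have "\<dots> = Ps'' ! k * (a * a')"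
      using cross[OF that] by (simp only: ac_simps)
    finally show ?thesis
      using a'(1) by simp
  qed
  then have "Ps'' = map ((*) (b * a')) Ps'"
    using assms(3,4) by (intro nth_equalityI) auto
  ultimately show ?thesis
    using that a'(2) by blast
qed

lemma rat_map_degree_eqI:
  fixes Q Q' :: "complex poly poly"
  assumes "Q \<noteq> 0" and "Q' \<noteq> 0" and "length Ps' = length Ps"
    and "\<forall>k<length Ps. Ps ! k * Q' = Ps' ! k * Q" and "rat_map_reduced Ps' Q'"
  shows "rat_map_degree Ps Q = Max (tdeg ` set (Q' # Ps'))"
  unfolding rat_map_degree_def
proof (rule the_equality)
  fix d
  assume "\<exists>Ps'' Q''. Q'' \<noteq> 0 \<and> length Ps'' = length Ps \<and>
      (\<forall>k<length Ps. Ps ! k * Q'' = Ps'' ! k * Q) \<and> rat_map_reduced Ps'' Q'' \<and>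
      d = Max (tdeg ` set (Q'' # Ps''))"
  then obtain Ps'' Q'' where h: "length Ps'' = length Ps"
      "\<forall>k<length Ps. Ps ! k * Q'' = Ps'' ! k * Q" "rat_map_reduced Ps'' Q''"
      "d = Max (tdeg ` set (Q'' # Ps''))" by blast
  obtain u where u: "is_unit u" "Q'' = u * Q'" "Ps'' = map ((*) u) Ps'"
    using reduced_representation_unique[OF assms(1-3) h(1) assms(4) h(2) assms(5) h(3)] .
  then show "d = Max (tdeg ` set (Q' # Ps'))"
    using h(4) by (simp add: image_image tdeg_unit_mult[OF u(1)])
qed (use assms in blast)

lemma rat_map_degree_reduced:
  fixes Q :: "complex poly poly"
  assumes "Q \<noteq> 0" and "rat_map_reduced Ps Q"
  shows "rat_map_degree Ps Q = Max (tdeg ` set (Q # Ps))"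
  using rat_map_degree_eqI[OF assms(1,1)] assms(2) by simp

lemma rat_map_degree_common_factor:
  fixes D Q :: "complex poly poly"
  assumes "D \<noteq> 0" and "Q \<noteq> 0" and "rat_map_reduced Ps Q"
  shows "rat_map_degree (map ((*) D) Ps) (D * Q) = Max (tdeg ` set (Q # Ps))"
  using assms by (intro rat_map_degree_eqI) (auto simp: ac_simps)

lemma G3_Q_coeffs:
  "G3_Q e s = (let E = complex_of_real e; S = complex_of_real s in
     [: [:256*E, 0, 64:], [:-32*\<i>, -192*\<i>*E*S, 32*\<i>*E:], [:-(17*E + 144*S^2), 24*S:], [:\<i>:] :])"
  by (rule poly_poly_eqI)
    (simp add: G3_Q_def Zv_def Wv_def cst_def Let_def algebra_simps power2_eq_square power3_eq_cube)

lemma G3_Q_nonzero: "e \<noteq> 0 \<Longrightarrow> G3_Q e s \<noteq> 0"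
  by (simp add: G3_Q_coeffs Let_def)

lemma lead_coeff_G3_Q: "lead_coeff (G3_Q e s) = [:\<i>:]"
  by (simp add: G3_Q_coeffs Let_def)

lemma G3_Q_at_z0:
  "poly (poly (G3_Q e s) [:w:]) 0 =
     256*e - 32*\<i>*w - (17*e + 144*s^2)*w^2 + \<i>*w^3"
  by (simp add: G3_Q_coeffs Let_def algebra_simps power2_eq_square power3_eq_cube)

lemma G3_P2_at_z0: "poly (poly (G3_P2 e s) [:w:]) 0 = -(w^2 * (16 + \<i>*e*w))"
  by (simp add: G3_P2_def Zv_def Wv_def cst_def Let_def algebra_simps power2_eq_square power3_eq_cube)

lemma three_le_tdeg_G3_P1: "3 \<le> tdeg (G3_P1 e s)"
proof -
  have "poly (G3_P1 e s) 0 = [:0, 256*complex_of_real e, 0, 64:]"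
    by (rule poly_eq_poly_eq_iff[THEN iffD1], rule ext)
      (simp add: G3_P1_def Zv_def Wv_def cst_def Let_def algebra_simps power2_eq_square power3_eq_cube)
  then show ?thesis
    using tdeg_ge[of "G3_P1 e s" 0] by (simp add: poly_0_coeff_0)
qed

lemma G3_Q_P2_common_root_at_z0:
  assumes "e \<in> {1, -1}"
    and Q: "poly (poly (G3_Q e s) [:w:]) 0 = 0" and P2: "poly (poly (G3_P2 e s) [:w:]) 0 = 0"
  shows "e + 4 * s^2 = 0"
proof -
  define E S where "E = complex_of_real e" and "S = complex_of_real s"
  have E2: "E * E = 1"
    using assms(1) unfolding E_def by auto
  have Q': "256*E - 32*\<i>*w - (17*E + 144*S^2)*w^2 + \<i>*w^3 = 0"
    using Q unfolding G3_Q_at_z0 E_def S_def .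
  have "w \<noteq> 0"
    using Q' E2 by auto
  moreover have "w^2 * (16 + \<i>*E*w) = 0"
    using P2 unfolding G3_P2_at_z0 E_def[symmetric] by simp
  ultimately have "\<i> * (E * w) = -16"
    by (simp add: mult.assoc add_eq_0_iff)
  then have "E * w = 16 * \<i>"
    by (metis (no_types) complex_i_not_zero minus_mult_minus mult_minus1 i_squared
        mult.assoc mult_cancel_left mult.commute)
  then have "w = 16 * \<i> * E"
    using E2 by (metis mult.assoc mult.commute mult_1)
  then have "768*E + 8448*E*(E*E) + 36864*S^2*(E*E) = 0"
    using Q' by (simp add: algebra_simps power2_eq_square power3_eq_cube)
  then have "9216 * (E + 4 * S^2) = 0"
    unfolding E2 by (simp add: algebra_simps)
  moreover have "complex_of_real (9216 * (e + 4 * s^2)) = 9216 * (E + 4 * S^2)"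
    unfolding E_def S_def by simp
  ultimately show ?thesis
    by (simp only: of_real_eq_0_iff) simp
qed

lemma sign_plus_four_square_eq_0:
  fixes e s :: real
  assumes "e \<in> {1, -1}" and "s \<ge> 0" and "e + 4 * s^2 = 0"
  shows "e = -1 \<and> s = 1/2"
proof -
  have "e = -1"
    using assms(1,3) by (auto simp: add_nonneg_eq_0_iff)
  then have "(2*s - 1) * (2*s + 1) = 0"
    using assms(3) by (simp add: algebra_simps power2_eq_square)
  then show ?thesis
    using \<open>e = -1\<close> assms(2) by auto
qed

lemma G3_reduced:
  assumes "e \<in> {1, -1}" and "e + 4 * s^2 \<noteq> 0"
  shows "rat_map_reduced [G3_P1 e s, G3_P2 e s, G3_P3 e s] (G3_Q e s)"
  unfolding rat_map_reduced_def
proof (intro allI impI)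
  fix d
  assume "d dvd G3_Q e s \<and> (\<forall>p\<in>set [G3_P1 e s, G3_P2 e s, G3_P3 e s]. d dvd p)"
  then have "d dvd G3_Q e s" and "d dvd G3_P2 e s"
    by auto
  moreover have "poly (poly (G3_P2 e s) [:w:]) 0 \<noteq> 0" if "poly (poly (G3_Q e s) [:w:]) 0 = 0" for w
    using G3_Q_P2_common_root_at_z0[OF assms(1) that] assms(2) by blast
  ultimately show "is_unit d"
    using is_unit_common_divisor[OF _ _ lead_coeff_G3_Q] by simp
qed

text \<open>
  For \<open>\<epsilon> = -1, s = 1/2\<close>: \<open>D = iw + 8z - 16\<close>, \<open>Q = D (w\<^sup>2 + (3i - 4iz)w + 8z + 16)\<close>,
  \<open>P\<^sub>1 = D (2w\<^sup>2 - 5izw + 8z\<^sup>2 + 16z)\<close>, \<open>P\<^sub>2 = D (w\<^sup>2 + 16z\<^sup>2)\<close>, \<open>P\<^sub>3 = D w (3iw + 8z + 16)\<close>.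
\<close>

definition G3_factor :: "complex poly poly" where "G3_factor = [: [:-16, 8:], [:\<i>:] :]"
definition G3_Q_red :: "complex poly poly" where "G3_Q_red = [: [:16, 8:], [:3*\<i>, -4*\<i>:], [:1:] :]"
definition G3_P1_red :: "complex poly poly" where "G3_P1_red = [: [:0, 16, 8:], [:0, -5*\<i>:], [:2:] :]"
definition G3_P2_red :: "complex poly poly" where "G3_P2_red = [: [:0, 0, 16:], 0, [:1:] :]"
definition G3_P3_red :: "complex poly poly" where "G3_P3_red = [: 0, [:16, 8:], [:3*\<i>:] :]"

lemma G3_special_factorization:
  "G3_Q (-1) (1/2) = G3_factor * G3_Q_red"
  "G3_P1 (-1) (1/2) = G3_factor * G3_P1_red"
  "G3_P2 (-1) (1/2) = G3_factor * G3_P2_red"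
  "G3_P3 (-1) (1/2) = G3_factor * G3_P3_red"
  by (rule poly_poly_eqI,
      simp add: G3_Q_def G3_P1_def G3_P2_def G3_P3_def Zv_def Wv_def cst_def Let_def
        G3_factor_def G3_Q_red_def G3_P1_red_def G3_P2_red_def G3_P3_red_def,
      simp add: algebra_simps power2_eq_square power3_eq_cube)+

lemma G3_special_reduced: "rat_map_reduced [G3_P1_red, G3_P2_red, G3_P3_red] G3_Q_red"
  unfolding rat_map_reduced_def
proof (intro allI impI)
  fix d
  assume "d dvd G3_Q_red \<and> (\<forall>p\<in>set [G3_P1_red, G3_P2_red, G3_P3_red]. d dvd p)"
  then have "d dvd G3_Q_red" and "d dvd G3_P2_red"
    by auto
  moreover have "lead_coeff G3_Q_red = [:1:]"
    by (simp add: G3_Q_red_def)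
  moreover have "poly (poly G3_P2_red [:w:]) 0 \<noteq> 0" if "poly (poly G3_Q_red [:w:]) 0 = 0" for w
    using that by (auto simp: G3_Q_red_def G3_P2_red_def)
  ultimately show "is_unit d"
    using is_unit_common_divisor[of d G3_Q_red G3_P2_red 1] by simp
qed

lemma G3_special_tdeg: "Max (tdeg ` set [G3_Q_red, G3_P1_red, G3_P2_red, G3_P3_red]) = 2"
proof (rule antisym)
  show "Max (tdeg ` set [G3_Q_red, G3_P1_red, G3_P2_red, G3_P3_red]) \<le> 2"
    unfolding G3_Q_red_def G3_P1_red_def G3_P2_red_def G3_P3_red_def
    by (auto intro!: tdeg_pCons3_le)
  have "2 \<le> tdeg G3_Q_red"
    using tdeg_ge[of G3_Q_red 2] by (simp add: G3_Q_red_def numeral_2_eq_2)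
  then show "2 \<le> Max (tdeg ` set [G3_Q_red, G3_P1_red, G3_P2_red, G3_P3_red])"
    by (simp add: le_max_iff_disj)
qed

theorem lemma4p2:
  fixes e s :: real
  assumes "e \<in> {1, -1}" and "s \<ge> 0"
  shows "rat_map_degree [G3_P1 e s, G3_P2 e s, G3_P3 e s] (G3_Q e s) = 2
         \<longleftrightarrow> e = -1 \<and> s = 1/2"
proof
  assume "e = -1 \<and> s = 1/2"
  then have "[G3_P1 e s, G3_P2 e s, G3_P3 e s] = map ((*) G3_factor) [G3_P1_red, G3_P2_red, G3_P3_red]"
    and "G3_Q e s = G3_factor * G3_Q_red"
    by (simp_all only: G3_special_factorization list.map)
  moreover have "G3_factor \<noteq> 0" and "G3_Q_red \<noteq> 0"
    by (simp_all add: G3_factor_def G3_Q_red_def)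
  ultimately show "rat_map_degree [G3_P1 e s, G3_P2 e s, G3_P3 e s] (G3_Q e s) = 2"
    using rat_map_degree_common_factor[OF _ _ G3_special_reduced] G3_special_tdeg by simp
next
  assume deg2: "rat_map_degree [G3_P1 e s, G3_P2 e s, G3_P3 e s] (G3_Q e s) = 2"
  show "e = -1 \<and> s = 1/2"
  proof (rule ccontr)
    assume "\<not> (e = -1 \<and> s = 1/2)"
    then have "rat_map_reduced [G3_P1 e s, G3_P2 e s, G3_P3 e s] (G3_Q e s)"
      using G3_reduced sign_plus_four_square_eq_0 assms by blast
    moreover have "G3_Q e s \<noteq> 0"
      using assms(1) G3_Q_nonzero by auto
    ultimately have "rat_map_degree [G3_P1 e s, G3_P2 e s, G3_P3 e s] (G3_Q e s)
        = Max (tdeg ` set [G3_Q e s, G3_P1 e s, G3_P2 e s, G3_P3 e s])"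
      by (simp add: rat_map_degree_reduced)
    also have "\<dots> \<ge> tdeg (G3_P1 e s)"
      by simp
    finally show False
      using deg2 three_le_tdeg_G3_P1[of e s] by linarith
  qed
qed

end
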